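(* Let $\epsilon>0$ and let $H$ be a $3$-graph on $n$ vertices. Then there exists a sub-$3$-graph $H_\epsilon$ of $H$ (with $V(H_\epsilon)\subseteq V(H)$ and $E(H_\epsilon)\subseteq E(H)$) such that (i) $|V(H)\setminus V(H_\epsilon)|\le 3\epsilon n$; (ii) $\deg_{H_\epsilon}(v)\ge \deg_H(v)-7\epsilon\binom n2$ for every $v\in V(H_\epsilon)$; (iii) $\deg_H(S)>\epsilon^2 n$ for every pair $S\in\partial H_\epsilon$.
   Context: For a $3$-graph $H$ and a set $S$ of one or two vertices, $\deg_H(S)$ is the number of edges of $H$ containing $S$ (for a vertex $v$, $\deg_H(v)=\deg_H(\{v\})$). The shadow $\partial G$ of a $3$-graph $G$ is the set of pairs of vertices contained in at least one edge of $G$. *)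

theory Defs
  imports Complex_Main
begin

definition is_3graph :: "'a set \<Rightarrow> 'a set set \<Rightarrow> bool" where
  "is_3graph V E \<longleftrightarrow> (\<forall>e\<in>E. e \<subseteq> V \<and> card e = 3)"

text \<open>Number of edges containing the vertex set S (S a vertex or a pair).\<close>
definition deg :: "'a set set \<Rightarrow> 'a set \<Rightarrow> nat" where
  "deg E S = card {e \<in> E. S \<subseteq> e}"

definition shadow :: "'a set set \<Rightarrow> 'a set set" where
  "shadow E = {S. card S = 2 \<and> (\<exists>e\<in>E. S \<subseteq> e)}"

end

theory Submission
  imports Defs
begin

text \<open>Call a pair light if its codegree is at most \<open>\<epsilon>\<^sup>2 n\<close>. At most \<open>\<epsilon>\<^sup>2 n (n choose 2)\<close> edges
  contain a light pair, so by double counting at most \<open>3\<epsilon>n\<close> vertices lie in more than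
  \<open>\<epsilon> (n choose 2)\<close> of them; delete these vertices, all edges meeting them, and all edges through
  light pairs. A surviving vertex loses at most \<open>\<epsilon> (n choose 2)\<close> edges through light pairs and at
  most \<open>n - 2\<close> edges through each deleted vertex, i.e. at most
  \<open>\<epsilon> (n choose 2) + 3\<epsilon>n(n - 2) \<le> 7\<epsilon> (n choose 2)\<close> in total.\<close>

definition light_edges :: "'a set set \<Rightarrow> real \<Rightarrow> 'a set set" where
  "light_edges E t = {e\<in>E. \<exists>S. card S = 2 \<and> S \<subseteq> e \<and> real (deg E S) \<le> t}"

lemma is_3graph_light_edges: "is_3graph V E \<Longrightarrow> is_3graph V (light_edges E t)"
  unfolding light_edges_def is_3graph_def by auto

lemma is_3graph_empty_if_card_less:
  assumes "finite V" "is_3graph V E" "card V < 3"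
  shows "E = {}"
proof (rule equals0I)
  fix e assume "e \<in> E"
  then have "e \<subseteq> V" "card e = 3" using assms(2) unfolding is_3graph_def by auto
  then show False using assms(3) card_mono[OF assms(1) \<open>e \<subseteq> V\<close>] by simp
qed

lemma real_choose_two: "real (n choose 2) = real n * (real n - 1) / 2"
proof -
  have "even (n * (n - 1))" by (cases "even n") auto
  then have "2 * (n choose 2) = n * (n - 1)" unfolding choose_two by (metis dvd_mult_div_cancel)
  then have "2 * real (n choose 2) = real n * real (n - 1)" by (metis of_nat_mult of_nat_numeral)
  then show ?thesis by (cases n) auto
qed

lemma sum_deg_vertices:
  assumes "finite V" "\<forall>e\<in>E. e \<subseteq> V"
  shows "(\<Sum>v\<in>V. deg E {v}) = (\<Sum>e\<in>E. card e)"
proof -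
  have "finite E" using assms finite_subset[of E "Pow V"] by auto
  have "(\<Sum>v\<in>V. deg E {v}) = (\<Sum>v\<in>V. \<Sum>e\<in>E. if v \<in> e then 1 else 0)"
    unfolding deg_def using \<open>finite E\<close> by (simp add: sum.If_cases Int_def)
  also have "\<dots> = (\<Sum>e\<in>E. \<Sum>v\<in>V. if v \<in> e then 1 else 0)" by (rule sum.swap)
  also have "\<dots> = (\<Sum>e\<in>E. card e)"
    using assms by (intro sum.cong) (auto simp: sum.If_cases Int_absorb1)
  finally show ?thesis .
qed

lemma sum_deg_vertices_3graph:
  assumes "finite V" "is_3graph V E"
  shows "(\<Sum>v\<in>V. deg E {v}) = 3 * card E"
  using assms sum_deg_vertices[of V E] by (simp add: is_3graph_def)

lemma card_greater_mult_le_sum: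
  fixes f :: "'a \<Rightarrow> real"
  assumes "finite A" "\<forall>x\<in>A. f x \<ge> 0"
  shows "real (card {x\<in>A. f x > t}) * t \<le> (\<Sum>x\<in>A. f x)"
proof -
  have "real (card {x\<in>A. f x > t}) * t \<le> (\<Sum>x\<in>{x\<in>A. f x > t}. f x)"
    using sum_bounded_below[of "{x\<in>A. f x > t}" t f] by (auto simp: mult.commute)
  also have "\<dots> \<le> (\<Sum>x\<in>A. f x)" using assms by (intro sum_mono2) auto
  finally show ?thesis .
qed

lemma card_high_degree_vertices:
  assumes "finite V" "is_3graph V F"
  shows "real (card {v\<in>V. real (deg F {v}) > t}) * t \<le> 3 * real (card F)"
proof -
  have "real (card {v\<in>V. real (deg F {v}) > t}) * t \<le> (\<Sum>v\<in>V. real (deg F {v}))"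
    using assms(1) by (rule card_greater_mult_le_sum) simp
  also have "\<dots> = 3 * real (card F)"
    unfolding of_nat_sum[symmetric] sum_deg_vertices_3graph[OF assms] by simp
  finally show ?thesis .
qed

lemma card_pairs_le_choose:
  assumes "finite V"
  shows "card {S. S \<subseteq> V \<and> card S = 2 \<and> P S} \<le> card V choose 2"
proof -
  have "card {S. S \<subseteq> V \<and> card S = 2 \<and> P S} \<le> card {S. S \<subseteq> V \<and> card S = 2}"
    using assms by (intro card_mono) auto
  then show ?thesis using assms by (simp add: n_subsets)
qed

lemma card_light_edges_le:
  assumes "finite V" "is_3graph V E" "t \<ge> 0"
  shows "real (card (light_edges E t)) \<le> real (card V choose 2) * t"
proof -
  define B where "B = {S. S \<subseteq> V \<and> card S = 2 \<and> real (deg E S) \<le> t}"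
  have "finite B" using assms(1) unfolding B_def by (auto intro: finite_subset[of _ "Pow V"])
  have "finite E" using assms(1,2) finite_subset[of E "Pow V"] unfolding is_3graph_def by auto
  have "light_edges E t \<subseteq> (\<Union>S\<in>B. {e\<in>E. S \<subseteq> e})"
  proof
    fix e assume "e \<in> light_edges E t"
    then obtain S where "e \<in> E" "card S = 2" "S \<subseteq> e" "real (deg E S) \<le> t"
      unfolding light_edges_def by blast
    moreover have "e \<subseteq> V" using \<open>e \<in> E\<close> assms(2) unfolding is_3graph_def by blast
    ultimately show "e \<in> (\<Union>S\<in>B. {e\<in>E. S \<subseteq> e})" unfolding B_def by blast
  qed
  then have "card (light_edges E t) \<le> card (\<Union>S\<in>B. {e\<in>E. S \<subseteq> e})"
    by (intro card_mono finite_subset[OF _ \<open>finite E\<close>]) auto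
  also have "\<dots> \<le> (\<Sum>S\<in>B. deg E S)"
    unfolding deg_def using \<open>finite B\<close> by (rule card_UN_le)
  finally have "real (card (light_edges E t)) \<le> (\<Sum>S\<in>B. real (deg E S))"
    unfolding of_nat_sum[symmetric] of_nat_le_iff .
  also have "\<dots> \<le> real (card B) * t"
    using sum_bounded_above[of B "\<lambda>S. real (deg E S)" t] unfolding B_def by auto
  also have "\<dots> \<le> real (card V choose 2) * t"
    using card_pairs_le_choose[OF assms(1)] assms(3) unfolding B_def by (intro mult_right_mono) auto
  finally show ?thesis .
qed

lemma deg_pair_le_card_minus_two:
  assumes "finite V" "is_3graph V E" "u \<in> V" "v \<in> V" "u \<noteq> v"
  shows "deg E {v, u} \<le> card V - 2"
proof -
  have "{e\<in>E. {v, u} \<subseteq> e} \<subseteq> (\<lambda>w. {v, u, w}) ` (V - {u, v})"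
  proof
    fix e assume e: "e \<in> {e\<in>E. {v, u} \<subseteq> e}"
    then have "e \<subseteq> V" "card e = 3" "{v, u} \<subseteq> e" using assms(2) unfolding is_3graph_def by auto
    moreover have "finite e" using \<open>card e = 3\<close> card.infinite by fastforce
    ultimately have "card (e - {v, u}) = 1"
      using assms(5) by (simp add: card_Diff_subset)
    then obtain w where w: "e - {v, u} = {w}" by (auto simp: card_Suc_eq)
    then show "e \<in> (\<lambda>w. {v, u, w}) ` (V - {u, v})"
      using \<open>{v, u} \<subseteq> e\<close> \<open>e \<subseteq> V\<close> by (intro image_eqI[of _ _ w]) auto
  qed
  then have "deg E {v, u} \<le> card ((\<lambda>w. {v, u, w}) ` (V - {u, v}))"
    unfolding deg_def using assms(1) by (intro card_mono) auto
  also have "\<dots> \<le> card (V - {u, v})" using assms(1) by (intro card_image_le) auto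
  also have "\<dots> = card V - 2" using assms by (simp add: card_Diff_subset)
  finally show ?thesis .
qed

text \<open>An edge at \<open>v\<close> that does not survive either lies in \<open>F\<close> or contains a deleted vertex.\<close>

lemma deg_le_deg_after_deletion:
  assumes "finite V" "is_3graph V E" "F \<subseteq> E" "R \<subseteq> V" "v \<in> V - R"
  shows "deg E {v} \<le> deg {e\<in>E - F. e \<subseteq> V - R} {v} + deg F {v} + card R * (card V - 2)"
proof -
  let ?E' = "{e\<in>E - F. e \<subseteq> V - R}"
  have "finite E" using assms(1,2) finite_subset[of E "Pow V"] unfolding is_3graph_def by auto
  have "{e\<in>E. {v} \<subseteq> e} \<subseteq> ({e\<in>?E'. {v} \<subseteq> e} \<union> {e\<in>F. {v} \<subseteq> e})
          \<union> (\<Union>u\<in>R. {e\<in>E. {v, u} \<subseteq> e})"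
  proof
    fix e assume e: "e \<in> {e\<in>E. {v} \<subseteq> e}"
    then have "e \<subseteq> V" using assms(2) unfolding is_3graph_def by blast
    show "e \<in> ({e\<in>?E'. {v} \<subseteq> e} \<union> {e\<in>F. {v} \<subseteq> e}) \<union> (\<Union>u\<in>R. {e\<in>E. {v, u} \<subseteq> e})"
    proof (cases "e \<inter> R = {}")
      case True then show ?thesis using e \<open>e \<subseteq> V\<close> by blast
    next
      case False then show ?thesis using e by blast
    qed
  qed
  then have "deg E {v} \<le> card (({e\<in>?E'. {v} \<subseteq> e} \<union> {e\<in>F. {v} \<subseteq> e})
                               \<union> (\<Union>u\<in>R. {e\<in>E. {v, u} \<subseteq> e}))"
    unfolding deg_def using assms(3) by (intro card_mono finite_subset[OF _ \<open>finite E\<close>]) auto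
  also have "\<dots> \<le> card ({e\<in>?E'. {v} \<subseteq> e} \<union> {e\<in>F. {v} \<subseteq> e})
                  + card (\<Union>u\<in>R. {e\<in>E. {v, u} \<subseteq> e})"
    by (rule card_Un_le)
  also have "card ({e\<in>?E'. {v} \<subseteq> e} \<union> {e\<in>F. {v} \<subseteq> e}) \<le> deg ?E' {v} + deg F {v}"
    unfolding deg_def by (rule card_Un_le)
  also have "card (\<Union>u\<in>R. {e\<in>E. {v, u} \<subseteq> e}) \<le> (\<Sum>u\<in>R. deg E {v, u})"
    unfolding deg_def using finite_subset[OF assms(4,1)] by (rule card_UN_le)
  also have "\<dots> \<le> (\<Sum>u\<in>R. card V - 2)"
    using assms by (intro sum_mono deg_pair_le_card_minus_two) auto
  finally show ?thesis by simp
qed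

lemma card_vertices_in_many_light_edges:
  assumes "finite V" "is_3graph V E" "\<epsilon> > 0" "card V \<ge> 2"
  defines "C \<equiv> real (card V choose 2)"
  shows "real (card {v\<in>V. real (deg (light_edges E (\<epsilon>^2 * real (card V))) {v}) > \<epsilon> * C})
           \<le> 3 * \<epsilon> * real (card V)"
    (is "real (card ?R) \<le> _")
proof -
  let ?Eb = "light_edges E (\<epsilon>^2 * real (card V))"
  have "\<epsilon> * C > 0" using assms(3,4) by (simp add: C_def real_choose_two)
  have "(\<epsilon> * C) * real (card ?R) \<le> 3 * real (card ?Eb)"
    using card_high_degree_vertices[OF assms(1) is_3graph_light_edges[OF assms(2)]]
    by (simp add: mult.commute)
  also have "\<dots> \<le> 3 * (C * (\<epsilon>^2 * real (card V)))"
    unfolding C_def using card_light_edges_le[OF assms(1,2)] by simp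
  also have "\<dots> = (\<epsilon> * C) * (3 * \<epsilon> * real (card V))" by (simp add: power2_eq_square)
  finally show ?thesis using \<open>\<epsilon> * C > 0\<close> by (rule mult_left_le_imp_le)
qed

lemma mult_diff_two_le_choose_two:
  assumes "r \<le> c * real n" "c \<ge> 0" "n \<ge> 2"
  shows "r * (real n - 2) \<le> 2 * c * real (n choose 2)"
proof -
  have "r * (real n - 2) \<le> c * real n * (real n - 2)"
    using assms by (intro mult_right_mono) auto
  also have "\<dots> \<le> c * real n * (real n - 1)"
    using assms by (intro mult_left_mono) auto
  finally show ?thesis by (simp add: real_choose_two)
qed

theorem lemma3p3:
  fixes V :: "'a set" and E :: "'a set set" and \<epsilon> :: real and n :: nat
  assumes "\<epsilon> > 0"
    and "finite V" and "card V = n"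
    and "is_3graph V E"
  shows "\<exists>V' E'. V' \<subseteq> V \<and> E' \<subseteq> E \<and> is_3graph V' E'
     \<and> real (card (V - V')) \<le> 3 * \<epsilon> * real n
     \<and> (\<forall>v\<in>V'. real (deg E' {v}) \<ge> real (deg E {v}) - 7 * \<epsilon> * real (n choose 2))
     \<and> (\<forall>S\<in>shadow E'. real (deg E S) > \<epsilon>^2 * real n)"
proof (cases "n < 2")
  case True
  then have "E = {}" using is_3graph_empty_if_card_less[OF assms(2,4)] assms(3) by simp
  then show ?thesis
    by (intro exI[of _ V] exI[of _ "{}"]) (simp add: is_3graph_def deg_def shadow_def assms(1) less_imp_le)
next
  case False
  define C where "C = real (n choose 2)"
  define Eb where "Eb = light_edges E (\<epsilon>^2 * real n)"
  define R where "R = {v\<in>V. real (deg Eb {v}) > \<epsilon> * C}"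
  define E' where "E' = {e\<in>E - Eb. e \<subseteq> V - R}"
  have card_R: "real (card R) \<le> 3 * \<epsilon> * real n"
    using card_vertices_in_many_light_edges[OF assms(2,4,1)] False
    unfolding R_def Eb_def C_def assms(3) by simp
  show ?thesis
  proof (intro exI[of _ "V - R"] exI[of _ E'] conjI ballI)
    show "is_3graph (V - R) E'" using assms(4) unfolding E'_def is_3graph_def by auto
    show "real (card (V - (V - R))) \<le> 3 * \<epsilon> * real n"
      using card_R unfolding R_def by (simp add: Diff_Diff_Int Int_absorb1)
  next
    fix v assume "v \<in> V - R"
    have "deg E {v} \<le> deg E' {v} + deg Eb {v} + card R * (n - 2)"
      unfolding E'_def assms(3)[symmetric] using \<open>v \<in> V - R\<close>
      by (intro deg_le_deg_after_deletion[OF assms(2,4)]) (auto simp: Eb_def light_edges_def R_def)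
    then have "real (deg E {v}) \<le> real (deg E' {v}) + real (deg Eb {v}) + real (card R * (n - 2))"
      by (metis of_nat_add of_nat_mono)
    also have "real (card R * (n - 2)) = real (card R) * (real n - 2)" using False by (simp add: of_nat_diff)
    finally have "real (deg E {v}) \<le> real (deg E' {v}) + real (deg Eb {v}) + real (card R) * (real n - 2)" .
    moreover have "real (deg Eb {v}) \<le> \<epsilon> * C" using \<open>v \<in> V - R\<close> unfolding R_def by auto
    moreover have "real (card R) * (real n - 2) \<le> 6 * \<epsilon> * C"
      using mult_diff_two_le_choose_two[OF card_R] False assms(1) unfolding C_def by simp
    ultimately show "real (deg E' {v}) \<ge> real (deg E {v}) - 7 * \<epsilon> * real (n choose 2)"
      unfolding C_def by linarith
  next
    fix S assume "S \<in> shadow E'"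
    then obtain e where "card S = 2" "S \<subseteq> e" "e \<in> E - Eb" unfolding shadow_def E'_def by auto
    then show "real (deg E S) > \<epsilon>^2 * real n" unfolding Eb_def light_edges_def by auto
  qed (auto simp: E'_def)
qed

end
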